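(* As formal power series in $t$, $$1+\sum_{n\ge1}\sum_{\sigma\in \mathfrak{S}_n} x^{\operatorname{exc}\sigma} y^{\operatorname{fix}\sigma}q^{\operatorname{inv}\sigma} t^n =\cfrac{1}{1-b_0t-\cfrac{a_0c_1t^2}{1-b_1t-\cfrac{a_1c_2t^2}{\ddots}}},$$ where $a_h=x q^h [h+1]_{q}$, $b_h = yq^{2h} + (1+x) q^h [h]_{q}$, and $c_h= q^h [h]_{q}$.
   Context: $\mathfrak{S}_n$ is the set of permutations of $[n]$; $\operatorname{exc}\sigma=\#\{i:\sigma_i>i\}$, $\operatorname{fix}\sigma=\#\{i:\sigma_i=i\}$, $\operatorname{inv}\sigma=\#\{(i,j):i<j,\ \sigma_i>\sigma_j\}$. $[m]_q=1+q+\cdots+q^{m-1}$. *)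

theory Defs
  imports "HOL-Computational_Algebra.Formal_Power_Series" "HOL-Combinatorics.Permutations"
begin

definition exc :: "nat \<Rightarrow> (nat \<Rightarrow> nat) \<Rightarrow> nat" where
  "exc n \<sigma> = card {i \<in> {1..n}. \<sigma> i > i}"

definition fixpts :: "nat \<Rightarrow> (nat \<Rightarrow> nat) \<Rightarrow> nat" where
  "fixpts n \<sigma> = card {i \<in> {1..n}. \<sigma> i = i}"

definition inv :: "nat \<Rightarrow> (nat \<Rightarrow> nat) \<Rightarrow> nat" where
  "inv n \<sigma> = card {(i, j). i \<in> {1..n} \<and> j \<in> {1..n} \<and> i < j \<and> \<sigma> i > \<sigma> j}"

definition qint :: "'a::comm_semiring_1 \<Rightarrow> nat \<Rightarrow> 'a" where
  "qint q m = (\<Sum>i<m. q ^ i)"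

text \<open>Convergents of the J-fraction
  1/(1 - b_h t - lam_{h+1} t^2/(1 - b_{h+1} t - lam_{h+2} t^2/ ...)),
  truncated after k levels (innermost tail replaced by 0).
  Here lam (h+1) is the numerator a_h c_{h+1}.\<close>
fun jconv :: "(nat \<Rightarrow> 'a::field) \<Rightarrow> (nat \<Rightarrow> 'a) \<Rightarrow> nat \<Rightarrow> nat \<Rightarrow> 'a fps" where
  "jconv b lam 0 h = 0"
| "jconv b lam (Suc k) h =
     inverse (1 - fps_const (b h) * fps_X - fps_const (lam (Suc h)) * fps_X ^ 2 * jconv b lam k (Suc h))"

text \<open>The value of the infinite J-fraction is the limit (in the fps topology, i.e.
  coefficientwise stabilisation) of its convergents.\<close>

end

theory Submission
  imports Defs
begin

text \<open>
  By Flajolet's combinatorial theory of continued fractions, the n-th coefficient of the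
  J-fraction with level weights b h and numerators lam (h+1) is the total weight of Motzkin
  paths of length n from height 0 back to 0, where a level step at height h weighs b h, and
  up steps from h and down steps from h+1 weigh a' h and c' (h+1) for any factorisation
  lam (h+1) = a' h * c' (h+1).

  A permutation of [n] is built by deciding, for m = 1, ..., n in turn, the image and the
  preimage of m: each is either an earlier element still open or is postponed. The
  intermediate states are partial injections, whose number h of open arguments (equal to the
  number of open values) traces a Motzkin path. Regarding open images and preimages as
  infinite, excedances and inversions of the final permutation can be counted step by step,
  each step contributing a power of q given by the ranks of the chosen elements among the
  open ones. Summing over the choices yields the weights a' h = x q^(2h+1), b h and
  c' h = [h]_q^2, and indeed a' h c' (h+1) = a h c (h+1).
\<close>

section \<open>Coefficients of J-fraction convergents\<close>

fun motzkin :: "(nat \<Rightarrow> 'a::comm_semiring_1) \<Rightarrow> (nat \<Rightarrow> 'a) \<Rightarrow> (nat \<Rightarrow> 'a) \<Rightarrow> nat \<Rightarrow> nat \<Rightarrow> 'a"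
  where
    "motzkin a b c 0 k = (if k = 0 then 1 else 0)"
  | "motzkin a b c (Suc n) k = (if k = 0 then 0 else a (k - 1) * motzkin a b c n (k - 1))
        + b k * motzkin a b c n k + c (Suc k) * motzkin a b c n (Suc k)"

text \<open>
  \<open>motzkin a b c n k\<close> is the weight of Motzkin paths of length n from height 0 to height k,
  with up steps from h weighted by a h, level steps at h by b h and down steps from h by c h.
  Its generating function, cut off after depth K, is \<open>jconv_level\<close>: the product
  X^k a_0 \<cdots> a_(k-1) J_0 \<cdots> J_k of the tails J_j of the convergent that start at level j.
\<close>

fun jconv_level :: "(nat \<Rightarrow> 'a::field) \<Rightarrow> (nat \<Rightarrow> 'a) \<Rightarrow> (nat \<Rightarrow> 'a) \<Rightarrow> nat \<Rightarrow> nat \<Rightarrow> 'a fps"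
  where
    "jconv_level a b lam K 0 = jconv b lam K 0"
  | "jconv_level a b lam K (Suc k) =
       jconv_level a b lam K k * (fps_X * (fps_const (a k) * jconv b lam (K - Suc k) (Suc k)))"

declare jconv_level.simps [simp del]

lemma jconv_level_rec:
  fixes a b c lam :: "nat \<Rightarrow> 'a::field"
  assumes lam: "\<And>h. lam (Suc h) = a h * c (Suc h)" and "k < K"
  shows "jconv_level a b lam K k =
           (if k = 0 then 1 else fps_X * (fps_const (a (k - 1)) * jconv_level a b lam K (k - 1)))
         + fps_X * (fps_const (b k) * jconv_level a b lam K k)
         + fps_X * (fps_const (c (Suc k)) * jconv_level a b lam K (Suc k))"
proof -
  let ?G = "jconv_level a b lam K"
  define F where "F = jconv b lam (K - Suc k) (Suc k)"
  define D where "D = 1 - fps_const (b k) * fps_X - fps_const (lam (Suc k)) * fps_X ^ 2 * F"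
  have "K - k = Suc (K - Suc k)" using \<open>k < K\<close> by simp
  then have J: "jconv b lam (K - k) k = inverse D"
    by (simp only: jconv.simps D_def F_def)
  have JD: "inverse D * D = 1"
    by (rule inverse_mult_eq_1) (simp add: D_def)
  have GD: "?G k * D = (if k = 0 then 1 else fps_X * (fps_const (a (k - 1)) * ?G (k - 1)))"
  proof (cases k)
    case 0
    then show ?thesis using J JD by (simp add: jconv_level.simps)
  next
    case (Suc j)
    have "?G k * D = ?G j * (fps_X * (fps_const (a j) * (jconv b lam (K - k) k * D)))"
      using Suc by (simp add: mult.assoc jconv_level.simps)
    also have "\<dots> = ?G j * (fps_X * fps_const (a j))"
      unfolding J JD by simp
    finally show ?thesis using Suc by (simp add: mult.commute mult.left_commute)
  qed
  have "?G k * (fps_const (b k) * fps_X + fps_const (lam (Suc k)) * fps_X ^ 2 * F)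
      = fps_X * (fps_const (b k) * ?G k) + fps_X * (fps_const (c (Suc k)) * ?G (Suc k))"
    by (simp add: jconv_level.simps F_def lam fps_const_mult[symmetric] power2_eq_square
        algebra_simps del: fps_const_mult)
  moreover have "?G k = ?G k * D
      + ?G k * (fps_const (b k) * fps_X + fps_const (lam (Suc k)) * fps_X ^ 2 * F)"
    by (simp add: D_def algebra_simps)
  ultimately show ?thesis by (simp only: GD add.assoc)
qed

lemma coeff_jconv_level:
  fixes a b c lam :: "nat \<Rightarrow> 'a::field"
  assumes lam: "\<And>h. lam (Suc h) = a h * c (Suc h)"
  shows "n + k < K \<Longrightarrow> fps_nth (jconv_level a b lam K k) n = motzkin a b c n k"
proof (induction n arbitrary: k)
  case 0
  then show ?case by (subst jconv_level_rec[where c = c, OF lam]) auto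
next
  case (Suc n)
  have IH: "fps_nth (jconv_level a b lam K j) n = motzkin a b c n j" if "j \<le> Suc k" for j
    using Suc that by simp
  have "fps_nth (jconv_level a b lam K k) (Suc n) =
          (if k = 0 then 0 else a (k - 1) * fps_nth (jconv_level a b lam K (k - 1)) n)
        + b k * fps_nth (jconv_level a b lam K k) n
        + c (Suc k) * fps_nth (jconv_level a b lam K (Suc k)) n"
    by (subst jconv_level_rec[where c = c, OF lam]) (use Suc.prems in auto)
  then show ?case by (simp add: IH)
qed

lemma coeff_jconv:
  fixes a b c lam :: "nat \<Rightarrow> 'a::field"
  assumes "\<And>h. lam (Suc h) = a h * c (Suc h)" and "n < K"
  shows "fps_nth (jconv b lam K 0) n = motzkin a b c n 0"
  using coeff_jconv_level[where c = c, OF assms(1), of n 0 K] assms(2)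
  by (simp add: jconv_level.simps)

section \<open>Ranks and q-integers\<close>

definition rank_in :: "nat set \<Rightarrow> nat \<Rightarrow> nat" where
  "rank_in P w = card {v \<in> P. v < w}"

lemma qint_Suc: "qint q (Suc k) = qint q k + q ^ k"
  by (simp add: qint_def)

lemma sum_power_rank_in:
  fixes q :: "'a::comm_semiring_1"
  assumes "finite P"
  shows "(\<Sum>w\<in>P. q ^ rank_in P w) = qint q (card P)"
  using assms
proof (induction "card P" arbitrary: P)
  case 0
  then show ?case by (simp add: qint_def)
next
  case (Suc k)
  define M where "M = Max P"
  define P' where "P' = P - {M}"
  have "P \<noteq> {}" using Suc.hyps(2) by auto
  then have "M \<in> P" using Suc.prems by (simp add: M_def)
  have card_P': "card P' = k" and "finite P'"
    using Suc.hyps(2) Suc.prems \<open>M \<in> P\<close> by (simp_all add: P'_def)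
  have less_M: "w < M" if "w \<in> P'" for w
    using Suc.prems that by (auto simp: P'_def M_def intro: le_neq_trans)
  have rank_P': "rank_in P w = rank_in P' w" if "w \<in> P'" for w
  proof -
    have "{v \<in> P. v < w} = {v \<in> P'. v < w}" using less_M[OF that] by (auto simp: P'_def)
    then show ?thesis by (simp add: rank_in_def)
  qed
  have "{v \<in> P. v < M} = P'" using less_M by (auto simp: P'_def M_def Suc.prems)
  then have rank_M: "rank_in P M = k" using card_P' by (simp add: rank_in_def)
  have "(\<Sum>w\<in>P. q ^ rank_in P w) = q ^ rank_in P M + (\<Sum>w\<in>P'. q ^ rank_in P w)"
    unfolding P'_def by (rule sum.remove[OF Suc.prems \<open>M \<in> P\<close>])
  also have "(\<Sum>w\<in>P'. q ^ rank_in P w) = (\<Sum>w\<in>P'. q ^ rank_in P' w)"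
    by (rule sum.cong) (simp_all add: rank_P')
  also have "\<dots> = qint q k"
    using Suc.hyps(1)[of P'] card_P' \<open>finite P'\<close> by simp
  finally show ?case using rank_M Suc.hyps(2)[symmetric] by (simp add: qint_Suc add.commute)
qed

section \<open>Partial permutations\<close>

definition partial_perm :: "nat \<Rightarrow> (nat \<times> nat) set \<Rightarrow> bool" where
  "partial_perm n R \<longleftrightarrow> R \<subseteq> {1..n} \<times> {1..n}
     \<and> (\<forall>i u v. (i, u) \<in> R \<longrightarrow> (i, v) \<in> R \<longrightarrow> u = v)
     \<and> (\<forall>i j v. (i, v) \<in> R \<longrightarrow> (j, v) \<in> R \<longrightarrow> i = j)"

definition partial_perms :: "nat \<Rightarrow> (nat \<times> nat) set set" where
  "partial_perms n = {R. partial_perm n R}"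

definition open_vals :: "nat \<Rightarrow> (nat \<times> nat) set \<Rightarrow> nat set" where
  "open_vals n R = {v \<in> {1..n}. v \<notin> Range R}"

definition open_args :: "nat \<Rightarrow> (nat \<times> nat) set \<Rightarrow> nat set" where
  "open_args n R = {i \<in> {1..n}. i \<notin> Domain R}"

text \<open>
  A choice (\<alpha>, \<beta>) for the new element m maps m to \<alpha> and \<beta> to m; the value 0 leaves the
  image resp. the preimage of m open, and (m, m) makes m a fixed point.
\<close>

definition extend :: "nat \<Rightarrow> (nat \<times> nat) set \<Rightarrow> nat \<times> nat \<Rightarrow> (nat \<times> nat) set" where
  "extend m R ch = R \<union> (if fst ch = 0 then {} else {(m, fst ch)})
                     \<union> (if snd ch = 0 then {} else {(snd ch, m)})"

definition choices :: "nat \<Rightarrow> (nat \<times> nat) set \<Rightarrow> (nat \<times> nat) set" where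
  "choices n R = insert (Suc n, Suc n) (insert 0 (open_vals n R) \<times> insert 0 (open_args n R))"

definition restrict :: "nat \<Rightarrow> (nat \<times> nat) set \<Rightarrow> (nat \<times> nat) set" where
  "restrict n R = R \<inter> ({1..n} \<times> {1..n})"

definition choice_of :: "nat \<Rightarrow> (nat \<times> nat) set \<Rightarrow> nat \<times> nat" where
  "choice_of m R = ((if m \<in> Domain R then THE u. (m, u) \<in> R else 0),
                    (if m \<in> Range R then THE j. (j, m) \<in> R else 0))"

lemma partial_permD:
  assumes "partial_perm n R"
  shows "\<And>i v. (i, v) \<in> R \<Longrightarrow> i \<in> {1..n} \<and> v \<in> {1..n}"
    and "\<And>i u v. (i, u) \<in> R \<Longrightarrow> (i, v) \<in> R \<Longrightarrow> u = v"
    and "\<And>i j v. (i, v) \<in> R \<Longrightarrow> (j, v) \<in> R \<Longrightarrow> i = j"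
  using assms unfolding partial_perm_def by blast+

lemma open_vals_subset: "open_vals n R \<subseteq> {1..n}"
  and open_args_subset: "open_args n R \<subseteq> {1..n}"
  by (auto simp: open_vals_def open_args_def)

lemma finite_partial_perms: "finite (partial_perms n)"
proof (rule finite_subset)
  show "partial_perms n \<subseteq> Pow ({1..n} \<times> {1..n})"
    by (auto simp: partial_perms_def partial_perm_def)
qed simp

lemma finite_choices: "finite (choices n R)"
  unfolding choices_def
  using finite_subset[OF open_vals_subset] finite_subset[OF open_args_subset] by auto

lemma partial_perm_card:
  assumes R: "partial_perm n R"
  shows "card R \<le> n" "card (open_vals n R) = n - card R" "card (open_args n R) = n - card R"
proof -
  have sub: "R \<subseteq> {1..n} \<times> {1..n}" using R by (simp add: partial_perm_def)
  have "inj_on fst R" "inj_on snd R"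
    using partial_permD(2,3)[OF R] by (auto simp: inj_on_def)
  then have cD: "card (Domain R) = card R" and cR: "card (Range R) = card R"
    by (simp_all add: card_image fst_eq_Domain [symmetric] snd_eq_Range [symmetric])
  have sD: "Domain R \<subseteq> {1..n}" and sR: "Range R \<subseteq> {1..n}" using sub by auto
  have "card (Domain R) \<le> card {1..n}" by (rule card_mono) (use sD in auto)
  then show "card R \<le> n" using cD by simp
  have "open_args n R = {1..n} - Domain R" by (auto simp: open_args_def)
  then show "card (open_args n R) = n - card R"
    using card_Diff_subset[OF finite_subset[OF sD] sD] cD by simp
  have "open_vals n R = {1..n} - Range R" by (auto simp: open_vals_def)
  then show "card (open_vals n R) = n - card R"
    using card_Diff_subset[OF finite_subset[OF sR] sR] cR by simp
qed

lemma choice_of_fst: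
  assumes "partial_perm m R" "(m, u) \<in> R"
  shows "fst (choice_of m R) = u"
proof -
  have "(THE u. (m, u) \<in> R) = u"
    by (rule the_equality) (use partial_permD(2)[OF assms(1)] assms(2) in blast)+
  then show ?thesis using assms by (auto simp: choice_of_def)
qed

lemma choice_of_snd:
  assumes "partial_perm m R" "(j, m) \<in> R"
  shows "snd (choice_of m R) = j"
proof -
  have "(THE j. (j, m) \<in> R) = j"
    by (rule the_equality) (use partial_permD(3)[OF assms(1)] assms(2) in blast)+
  then show ?thesis using assms by (auto simp: choice_of_def)
qed

lemma choice_of_fst_mem:
  assumes "partial_perm m R" "fst (choice_of m R) \<noteq> 0"
  shows "(m, fst (choice_of m R)) \<in> R"
proof -
  obtain u where "(m, u) \<in> R" using assms(2) by (auto simp: choice_of_def split: if_splits)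
  then show ?thesis using choice_of_fst[OF assms(1)] by simp
qed

lemma choice_of_snd_mem:
  assumes "partial_perm m R" "snd (choice_of m R) \<noteq> 0"
  shows "(snd (choice_of m R), m) \<in> R"
proof -
  obtain j where "(j, m) \<in> R" using assms(2) by (auto simp: choice_of_def split: if_splits)
  then show ?thesis using choice_of_snd[OF assms(1)] by simp
qed

lemma partial_perm_restrict:
  "partial_perm (Suc n) R \<Longrightarrow> partial_perm n (restrict n R)"
  unfolding partial_perm_def restrict_def by auto

lemma extend_restrict:
  assumes R: "partial_perm (Suc n) R"
  shows "extend (Suc n) (restrict n R) (choice_of (Suc n) R) = R"
proof (rule set_eqI, rule iffI)
  fix p assume "p \<in> extend (Suc n) (restrict n R) (choice_of (Suc n) R)"
  then show "p \<in> R"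
    using choice_of_fst_mem[OF R] choice_of_snd_mem[OF R] unfolding extend_def restrict_def
    by (auto split: if_splits)
next
  fix p assume p: "p \<in> R"
  obtain i v where p_def: "p = (i, v)" by fastforce
  have iv: "i \<in> {1..Suc n}" "v \<in> {1..Suc n}" using partial_permD(1)[OF R] p p_def by auto
  then consider "i = Suc n" | "v = Suc n" | "i \<in> {1..n}" "v \<in> {1..n}" by fastforce
  then show "p \<in> extend (Suc n) (restrict n R) (choice_of (Suc n) R)"
  proof cases
    case 1
    then have "fst (choice_of (Suc n) R) = v" using choice_of_fst[OF R] p p_def by simp
    then show ?thesis using 1 p_def iv by (auto simp: extend_def)
  next
    case 2
    then have "snd (choice_of (Suc n) R) = i" using choice_of_snd[OF R] p p_def by simp
    then show ?thesis using 2 p_def iv by (auto simp: extend_def)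
  next
    case 3
    then show ?thesis using p p_def by (auto simp: extend_def restrict_def)
  qed
qed

lemma choice_of_in_choices:
  assumes R: "partial_perm (Suc n) R"
  shows "choice_of (Suc n) R \<in> choices n (restrict n R)"
proof -
  let ?m = "Suc n"
  obtain \<alpha> \<beta> where ch: "choice_of ?m R = (\<alpha>, \<beta>)" by fastforce
  have \<alpha>: "\<alpha> = 0 \<or> \<alpha> = ?m \<or> \<alpha> \<in> open_vals n (restrict n R)"
  proof (cases "?m \<in> Domain R")
    case True
    then obtain u where u: "(?m, u) \<in> R" by blast
    then have "\<alpha> = u" using choice_of_fst[OF R] ch by simp
    moreover have "u \<notin> Range (restrict n R)"
      using partial_permD(3)[OF R _ u] by (force simp: restrict_def)
    ultimately show ?thesis using partial_permD(1)[OF R u] by (auto simp: open_vals_def)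
  qed (use ch in \<open>simp add: choice_of_def\<close>)
  have \<beta>: "\<beta> = 0 \<or> \<beta> = ?m \<or> \<beta> \<in> open_args n (restrict n R)"
  proof (cases "?m \<in> Range R")
    case True
    then obtain j where j: "(j, ?m) \<in> R" by blast
    then have "\<beta> = j" using choice_of_snd[OF R] ch by simp
    moreover have "j \<notin> Domain (restrict n R)"
      using partial_permD(2)[OF R _ j] by (force simp: restrict_def)
    ultimately show ?thesis using partial_permD(1)[OF R j] by (auto simp: open_args_def)
  qed (use ch in \<open>simp add: choice_of_def\<close>)
  have "\<alpha> = ?m \<longleftrightarrow> \<beta> = ?m"
  proof
    assume "\<alpha> = ?m"
    then have "(?m, ?m) \<in> R" using choice_of_fst_mem[OF R] ch by auto
    then show "\<beta> = ?m" using choice_of_snd[OF R] ch by simp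
  next
    assume "\<beta> = ?m"
    then have "(?m, ?m) \<in> R" using choice_of_snd_mem[OF R] ch by auto
    then show "\<alpha> = ?m" using choice_of_fst[OF R] ch by simp
  qed
  then show ?thesis
    using \<alpha> \<beta> open_vals_subset[of n] open_args_subset[of n] unfolding ch choices_def by auto
qed

lemma partial_perm_extend:
  assumes R: "partial_perm n R" and ch: "ch \<in> choices n R"
  shows "partial_perm (Suc n) (extend (Suc n) R ch)"
proof (cases "ch = (Suc n, Suc n)")
  case True
  then show ?thesis using R unfolding partial_perm_def extend_def by auto
next
  case False
  obtain \<alpha> \<beta> where ch_def: "ch = (\<alpha>, \<beta>)" by fastforce
  have "\<alpha> = 0 \<or> (\<alpha> \<in> {1..n} \<and> \<alpha> \<notin> Range R)" "\<beta> = 0 \<or> (\<beta> \<in> {1..n} \<and> \<beta> \<notin> Domain R)"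
    using ch False unfolding ch_def choices_def open_vals_def open_args_def by auto
  then show ?thesis using R unfolding partial_perm_def extend_def ch_def
    by (auto simp: Domain_iff Range_iff; fastforce)
qed

lemma restrict_extend:
  "partial_perm n R \<Longrightarrow> restrict n (extend (Suc n) R ch) = R"
  unfolding partial_perm_def restrict_def extend_def by auto

lemma choice_of_extend:
  assumes R: "partial_perm n R" and ch: "ch \<in> choices n R"
  shows "choice_of (Suc n) (extend (Suc n) R ch) = ch"
proof -
  let ?E = "extend (Suc n) R ch"
  have E: "partial_perm (Suc n) ?E" by (rule partial_perm_extend[OF R ch])
  obtain \<alpha> \<beta> where ch_def: "ch = (\<alpha>, \<beta>)" by fastforce
  have not_R: "(Suc n, v) \<notin> R" "(v, Suc n) \<notin> R" for v
    using partial_permD(1)[OF R] by force+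
  have "\<alpha> = Suc n \<longleftrightarrow> \<beta> = Suc n"
    using ch open_vals_subset[of n R] open_args_subset[of n R] unfolding ch_def choices_def by auto
  then have "fst (choice_of (Suc n) ?E) = \<alpha>" "snd (choice_of (Suc n) ?E) = \<beta>"
    using choice_of_fst[OF E] choice_of_snd[OF E] not_R
    by (auto simp: choice_of_def extend_def ch_def)
  then show ?thesis using ch_def by (metis prod.collapse)
qed

lemma sum_partial_perms_Suc:
  "sum f (partial_perms (Suc n))
     = (\<Sum>(R, ch) \<in> Sigma (partial_perms n) (choices n). f (extend (Suc n) R ch))"
proof (rule sum.reindex_bij_witness[where j = "\<lambda>R. (restrict n R, choice_of (Suc n) R)"
                                    and i = "\<lambda>(R, ch). extend (Suc n) R ch"])
  fix R assume "R \<in> partial_perms (Suc n)"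
  then have R: "partial_perm (Suc n) R" by (simp add: partial_perms_def)
  show "(case (restrict n R, choice_of (Suc n) R) of (R, ch) \<Rightarrow> extend (Suc n) R ch) = R"
    "(case (restrict n R, choice_of (Suc n) R) of (R, ch) \<Rightarrow> f (extend (Suc n) R ch)) = f R"
    using extend_restrict[OF R] by simp_all
  show "(restrict n R, choice_of (Suc n) R) \<in> Sigma (partial_perms n) (choices n)"
    using partial_perm_restrict[OF R] choice_of_in_choices[OF R] by (simp add: partial_perms_def)
next
  fix p assume "p \<in> Sigma (partial_perms n) (choices n)"
  then obtain R ch where p: "p = (R, ch)" "partial_perm n R" "ch \<in> choices n R"
    by (auto simp: partial_perms_def)
  then show "(restrict n (case p of (R, ch) \<Rightarrow> extend (Suc n) R ch),
              choice_of (Suc n) (case p of (R, ch) \<Rightarrow> extend (Suc n) R ch)) = p"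
    "(case p of (R, ch) \<Rightarrow> extend (Suc n) R ch) \<in> partial_perms (Suc n)"
    using restrict_extend choice_of_extend partial_perm_extend by (simp_all add: partial_perms_def)
qed

section \<open>Statistics of partial permutations\<close>

text \<open>
  An open argument is regarded as having an infinite image and an open value as having an
  infinite preimage: in the construction they are matched later, with larger elements.
  For the graph of a permutation s, \<open>pinv\<close> counts the pairs (i, s j) with i < j and
  s i > s j, i.e. the inversions of s.
\<close>

definition img_gt :: "(nat \<times> nat) set \<Rightarrow> nat \<Rightarrow> nat \<Rightarrow> bool" where
  "img_gt R i v \<longleftrightarrow> i \<notin> Domain R \<or> (\<exists>u. (i, u) \<in> R \<and> v < u)"

definition preimg_gt :: "(nat \<times> nat) set \<Rightarrow> nat \<Rightarrow> nat \<Rightarrow> bool" where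
  "preimg_gt R v i \<longleftrightarrow> v \<notin> Range R \<or> (\<exists>j. (j, v) \<in> R \<and> i < j)"

definition pexc :: "nat \<Rightarrow> (nat \<times> nat) set \<Rightarrow> nat" where
  "pexc n R = card {i \<in> {1..n}. img_gt R i i}"

definition pfix :: "nat \<Rightarrow> (nat \<times> nat) set \<Rightarrow> nat" where
  "pfix n R = card {i \<in> {1..n}. (i, i) \<in> R}"

definition pinv :: "nat \<Rightarrow> (nat \<times> nat) set \<Rightarrow> nat" where
  "pinv n R = card {p \<in> {1..n} \<times> {1..n}. img_gt R (fst p) (snd p) \<and> preimg_gt R (snd p) (fst p)}"

definition pweight :: "'a::comm_ring_1 \<Rightarrow> 'a \<Rightarrow> 'a \<Rightarrow> nat \<Rightarrow> (nat \<times> nat) set \<Rightarrow> 'a" where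
  "pweight x y q n R = x ^ pexc n R * y ^ pfix n R * q ^ pinv n R"

lemma card_interval_Suc_filter:
  "card {i \<in> {1..Suc n}. P i} = card {i \<in> {1..n}. P i} + (if P (Suc n) then 1 else 0)"
proof -
  have "{i \<in> {1..Suc n}. P i} = {i \<in> {1..n}. P i} \<union> (if P (Suc n) then {Suc n} else {})"
    by (auto simp: le_Suc_eq)
  then show ?thesis by (simp add: card_Un_disjoint)
qed

lemma card_square_Suc_filter:
  "card {p \<in> {1..Suc n} \<times> {1..Suc n}. P p} = card {p \<in> {1..n} \<times> {1..n}. P p}
     + card {v \<in> {1..n}. P (Suc n, v)} + card {i \<in> {1..n}. P (i, Suc n)}
     + (if P (Suc n, Suc n) then 1 else 0)"
proof -
  let ?m = "Suc n"
  let ?A = "{p \<in> {1..n} \<times> {1..n}. P p}"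
  let ?B = "Pair ?m ` {v \<in> {1..n}. P (?m, v)}"
  let ?C = "(\<lambda>i. (i, ?m)) ` {i \<in> {1..n}. P (i, ?m)}"
  let ?D = "if P (?m, ?m) then {(?m, ?m)} else {}"
  have "{p \<in> {1..?m} \<times> {1..?m}. P p} = ((?A \<union> ?B) \<union> ?C) \<union> ?D"
    by (auto simp: le_Suc_eq)
  moreover have "card (((?A \<union> ?B) \<union> ?C) \<union> ?D) = card ((?A \<union> ?B) \<union> ?C) + card ?D"
    by (rule card_Un_disjoint) auto
  moreover have "card ((?A \<union> ?B) \<union> ?C) = card (?A \<union> ?B) + card ?C"
    by (rule card_Un_disjoint) auto
  moreover have "card (?A \<union> ?B) = card ?A + card ?B"
    by (rule card_Un_disjoint) auto
  moreover have "card ?B = card {v \<in> {1..n}. P (?m, v)}" "card ?C = card {i \<in> {1..n}. P (i, ?m)}"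
    by (simp_all add: card_image inj_on_def)
  ultimately show ?thesis by simp
qed

locale extension =
  fixes n :: nat and R :: "(nat \<times> nat) set" and \<alpha> \<beta> :: nat
  assumes R: "partial_perm n R" and ch: "(\<alpha>, \<beta>) \<in> choices n R"
begin

abbreviation "E \<equiv> extend (Suc n) R (\<alpha>, \<beta>)"

lemma partial_perm_E: "partial_perm (Suc n) E"
  by (rule partial_perm_extend[OF R ch])

lemma choice_cases:
  "(\<alpha> = Suc n \<and> \<beta> = Suc n)
   \<or> ((\<alpha> = 0 \<or> (\<alpha> \<in> {1..n} \<and> \<alpha> \<notin> Range R)) \<and> (\<beta> = 0 \<or> (\<beta> \<in> {1..n} \<and> \<beta> \<notin> Domain R)))"
  using ch unfolding choices_def open_vals_def open_args_def by auto

lemma R_bounds: "(i, v) \<in> R \<Longrightarrow> i \<in> {1..n} \<and> v \<in> {1..n}"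
  using partial_permD(1)[OF R] by blast

lemma E_bounds: "(i, v) \<in> E \<Longrightarrow> i \<in> {1..Suc n} \<and> v \<in> {1..Suc n}"
  using partial_permD(1)[OF partial_perm_E] by blast

lemma mem_E:
  "(i, v) \<in> E \<longleftrightarrow> (i, v) \<in> R \<or> (\<alpha> \<noteq> 0 \<and> i = Suc n \<and> v = \<alpha>) \<or> (\<beta> \<noteq> 0 \<and> i = \<beta> \<and> v = Suc n)"
  by (auto simp: extend_def)

lemma img_gt_E_old: "i \<in> {1..n} \<Longrightarrow> v \<in> {1..n} \<Longrightarrow> img_gt E i v \<longleftrightarrow> img_gt R i v"
  using choice_cases R_bounds unfolding img_gt_def Domain_iff mem_E by (auto; force)

lemma preimg_gt_E_old: "i \<in> {1..n} \<Longrightarrow> v \<in> {1..n} \<Longrightarrow> preimg_gt E v i \<longleftrightarrow> preimg_gt R v i"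
  using choice_cases R_bounds unfolding preimg_gt_def Range_iff mem_E by (auto; force)

lemma img_gt_E_new_arg: "img_gt E (Suc n) v \<longleftrightarrow> (\<alpha> = 0 \<or> v < \<alpha>)"
  using choice_cases R_bounds unfolding img_gt_def Domain_iff mem_E by (auto; force)

lemma preimg_gt_E_new_arg:
  "v \<in> {1..n} \<Longrightarrow> preimg_gt E v (Suc n) \<longleftrightarrow> (v \<notin> Range R \<and> v \<noteq> \<alpha>)"
  using choice_cases R_bounds E_bounds unfolding preimg_gt_def Range_iff mem_E by (auto; force)

lemma img_gt_E_new_val:
  "i \<in> {1..n} \<Longrightarrow> img_gt E i (Suc n) \<longleftrightarrow> (i \<notin> Domain R \<and> i \<noteq> \<beta>)"
  using choice_cases R_bounds E_bounds unfolding img_gt_def Domain_iff mem_E by (auto; force)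

lemma preimg_gt_E_new_val: "preimg_gt E (Suc n) i \<longleftrightarrow> (\<beta> = 0 \<or> i < \<beta>)"
  using choice_cases R_bounds unfolding preimg_gt_def Range_iff mem_E by (auto; force)

lemma pexc_E: "pexc (Suc n) E = pexc n R + (if \<alpha> = 0 then 1 else 0)"
proof -
  have "{i \<in> {1..n}. img_gt E i i} = {i \<in> {1..n}. img_gt R i i}" using img_gt_E_old by auto
  moreover have "img_gt E (Suc n) (Suc n) \<longleftrightarrow> \<alpha> = 0" using img_gt_E_new_arg choice_cases by auto
  ultimately show ?thesis unfolding pexc_def card_interval_Suc_filter[where n = n] by simp
qed

lemma pfix_E: "pfix (Suc n) E = pfix n R + (if \<alpha> = Suc n then 1 else 0)"
proof -
  have "{i \<in> {1..n}. (i, i) \<in> E} = {i \<in> {1..n}. (i, i) \<in> R}" unfolding mem_E by auto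
  moreover have "(Suc n, Suc n) \<in> E \<longleftrightarrow> \<alpha> = Suc n"
    unfolding mem_E using choice_cases R_bounds[of "Suc n" "Suc n"] by auto
  ultimately show ?thesis unfolding pfix_def card_interval_Suc_filter[where n = n] by simp
qed

lemma pinv_E: "pinv (Suc n) E = pinv n R
   + card {v \<in> {1..n}. v \<notin> Range R \<and> v \<noteq> \<alpha> \<and> (\<alpha> = 0 \<or> v < \<alpha>)}
   + card {i \<in> {1..n}. i \<notin> Domain R \<and> i \<noteq> \<beta> \<and> (\<beta> = 0 \<or> i < \<beta>)}
   + (if \<alpha> = 0 \<and> \<beta> = 0 then 1 else 0)"
proof -
  let ?P = "\<lambda>p. img_gt E (fst p) (snd p) \<and> preimg_gt E (snd p) (fst p)"
  have "{p \<in> {1..n} \<times> {1..n}. ?P p}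
      = {p \<in> {1..n} \<times> {1..n}. img_gt R (fst p) (snd p) \<and> preimg_gt R (snd p) (fst p)}"
    using img_gt_E_old preimg_gt_E_old by auto
  moreover have "{v \<in> {1..n}. ?P (Suc n, v)} = {v \<in> {1..n}. v \<notin> Range R \<and> v \<noteq> \<alpha> \<and> (\<alpha> = 0 \<or> v < \<alpha>)}"
    using img_gt_E_new_arg preimg_gt_E_new_arg by auto
  moreover have "{i \<in> {1..n}. ?P (i, Suc n)} = {i \<in> {1..n}. i \<notin> Domain R \<and> i \<noteq> \<beta> \<and> (\<beta> = 0 \<or> i < \<beta>)}"
    using img_gt_E_new_val preimg_gt_E_new_val by auto
  moreover have "?P (Suc n, Suc n) \<longleftrightarrow> \<alpha> = 0 \<and> \<beta> = 0"
    using img_gt_E_new_arg preimg_gt_E_new_val choice_cases by auto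
  ultimately show ?thesis unfolding pinv_def card_square_Suc_filter[where P = ?P and n = n] by simp
qed

lemma card_E:
  "card E + (if \<alpha> = Suc n then 1 else 0)
     = card R + (if \<alpha> = 0 then 0 else 1) + (if \<beta> = 0 then 0 else 1)"
proof -
  have "finite R" using R finite_subset[of R "{1..n} \<times> {1..n}"] by (auto simp: partial_perm_def)
  have not_R: "(Suc n, v) \<notin> R" "(v, Suc n) \<notin> R" for v using R_bounds by force+
  show ?thesis
  proof (cases "\<alpha> = Suc n")
    case True
    then have "\<beta> = Suc n" using choice_cases by auto
    then have "E = insert (Suc n, Suc n) R" using True by (auto simp: extend_def)
    then show ?thesis using True \<open>\<beta> = Suc n\<close> \<open>finite R\<close> not_R by simp
  next
    case False
    then have "\<beta> \<noteq> Suc n" using choice_cases by auto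
    then show ?thesis using False \<open>finite R\<close> not_R by (auto simp: extend_def card_insert_if)
  qed
qed

lemma pweight_E:
  "pweight x y q (Suc n) E
     = pweight x y q n R * (if \<alpha> = 0 then x else 1) * (if \<alpha> = Suc n then y else 1)
     * q ^ (card {v \<in> {1..n}. v \<notin> Range R \<and> v \<noteq> \<alpha> \<and> (\<alpha> = 0 \<or> v < \<alpha>)}
          + card {i \<in> {1..n}. i \<notin> Domain R \<and> i \<noteq> \<beta> \<and> (\<beta> = 0 \<or> i < \<beta>)}
          + (if \<alpha> = 0 \<and> \<beta> = 0 then 1 else 0))"
  unfolding pweight_def pexc_E pfix_E pinv_E by (simp add: power_add algebra_simps)

end

section \<open>The weight recurrence\<close>

definition up_weight :: "'a::comm_ring_1 \<Rightarrow> 'a \<Rightarrow> nat \<Rightarrow> 'a" where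
  "up_weight x q h = x * q ^ (2 * h + 1)"

definition level_weight :: "'a::comm_ring_1 \<Rightarrow> 'a \<Rightarrow> 'a \<Rightarrow> nat \<Rightarrow> 'a" where
  "level_weight x y q h = y * q ^ (2 * h) + (1 + x) * q ^ h * qint q h"

definition down_weight :: "'a::comm_ring_1 \<Rightarrow> nat \<Rightarrow> 'a" where
  "down_weight q h = qint q h * qint q h"

definition extension_weight ::
    "'a::comm_ring_1 \<Rightarrow> 'a \<Rightarrow> 'a \<Rightarrow> nat \<Rightarrow> nat \<Rightarrow> (nat \<times> nat) set \<Rightarrow> nat \<times> nat \<Rightarrow> 'a" where
  "extension_weight x y q n k R ch =
     (if card (extend (Suc n) R ch) + k = Suc n
      then pweight x y q (Suc n) (extend (Suc n) R ch) else 0)"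

lemma extension_weight_fixpoint:
  assumes R: "partial_perm n R"
  shows "extension_weight x y q n k R (Suc n, Suc n)
       = (if n - card R = k then pweight x y q n R * y * q ^ (2 * (n - card R)) else 0)"
proof -
  interpret e: extension n R "Suc n" "Suc n" by standard (fact R, simp add: choices_def)
  have vals: "{v \<in> {1..n}. v \<notin> Range R \<and> v \<noteq> Suc n \<and> (Suc n = 0 \<or> v < Suc n)} = open_vals n R"
    and args: "{i \<in> {1..n}. i \<notin> Domain R \<and> i \<noteq> Suc n \<and> (Suc n = 0 \<or> i < Suc n)} = open_args n R"
    by (auto simp: open_vals_def open_args_def)
  have card: "card e.E = card R + 1" using e.card_E by simp
  show ?thesis using partial_perm_card[OF R]
    unfolding extension_weight_def e.pweight_E vals args card by (auto simp: mult_2 power_add)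
qed

lemma extension_weight_0_0:
  assumes R: "partial_perm n R"
  shows "extension_weight x y q n k R (0, 0)
       = (if n - card R + 1 = k then pweight x y q n R * up_weight x q (n - card R) else 0)"
proof -
  interpret e: extension n R 0 0 by standard (fact R, simp add: choices_def)
  have vals: "{v \<in> {1..n}. v \<notin> Range R \<and> v \<noteq> 0 \<and> (0 = (0::nat) \<or> v < 0)} = open_vals n R"
    and args: "{i \<in> {1..n}. i \<notin> Domain R \<and> i \<noteq> 0 \<and> (0 = (0::nat) \<or> i < 0)} = open_args n R"
    by (auto simp: open_vals_def open_args_def)
  have card: "card e.E = card R" using e.card_E by simp
  show ?thesis using partial_perm_card[OF R]
    unfolding extension_weight_def e.pweight_E vals args card up_weight_def
    by (auto simp: mult_2 power_add)
qed

lemma extension_weight_0_b: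
  assumes R: "partial_perm n R" and b: "b \<in> open_args n R"
  shows "extension_weight x y q n k R (0, b)
       = (if n - card R = k
          then pweight x y q n R * x * q ^ (n - card R) * q ^ rank_in (open_args n R) b else 0)"
proof -
  interpret e: extension n R 0 b by standard (fact R, use b in \<open>simp add: choices_def\<close>)
  have "b \<noteq> 0" using b by (auto simp: open_args_def)
  have vals: "{v \<in> {1..n}. v \<notin> Range R \<and> v \<noteq> 0 \<and> (0 = (0::nat) \<or> v < 0)} = open_vals n R"
    and args: "{i \<in> {1..n}. i \<notin> Domain R \<and> i \<noteq> b \<and> (b = 0 \<or> i < b)} = {i \<in> open_args n R. i < b}"
    using \<open>b \<noteq> 0\<close> by (auto simp: open_vals_def open_args_def)
  have card: "card e.E = card R + 1" using e.card_E \<open>b \<noteq> 0\<close> by simp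
  show ?thesis using partial_perm_card[OF R] \<open>b \<noteq> 0\<close>
    unfolding extension_weight_def e.pweight_E vals args card rank_in_def by (auto simp: power_add)
qed

lemma extension_weight_a_0:
  assumes R: "partial_perm n R" and a: "a \<in> open_vals n R"
  shows "extension_weight x y q n k R (a, 0)
       = (if n - card R = k
          then pweight x y q n R * q ^ (n - card R) * q ^ rank_in (open_vals n R) a else 0)"
proof -
  interpret e: extension n R a 0 by standard (fact R, use a in \<open>simp add: choices_def\<close>)
  have "a \<noteq> 0" "a \<le> n" using a by (auto simp: open_vals_def)
  have vals: "{v \<in> {1..n}. v \<notin> Range R \<and> v \<noteq> a \<and> (a = 0 \<or> v < a)} = {v \<in> open_vals n R. v < a}"
    and args: "{i \<in> {1..n}. i \<notin> Domain R \<and> i \<noteq> 0 \<and> (0 = (0::nat) \<or> i < 0)} = open_args n R"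
    using \<open>a \<noteq> 0\<close> by (auto simp: open_vals_def open_args_def)
  have card: "card e.E = card R + 1" using e.card_E \<open>a \<noteq> 0\<close> \<open>a \<le> n\<close> by simp
  show ?thesis using partial_perm_card[OF R] \<open>a \<noteq> 0\<close> \<open>a \<le> n\<close>
    unfolding extension_weight_def e.pweight_E vals args card rank_in_def by (auto simp: power_add)
qed

lemma extension_weight_a_b:
  assumes R: "partial_perm n R" and a: "a \<in> open_vals n R" and b: "b \<in> open_args n R"
  shows "extension_weight x y q n k R (a, b)
       = (if n - card R = k + 1
          then pweight x y q n R * q ^ rank_in (open_vals n R) a * q ^ rank_in (open_args n R) b
          else 0)"
proof -
  interpret e: extension n R a b by standard (fact R, use a b in \<open>simp add: choices_def\<close>)
  have "a \<noteq> 0" "a \<le> n" "b \<noteq> 0" using a b by (auto simp: open_vals_def open_args_def)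
  have vals: "{v \<in> {1..n}. v \<notin> Range R \<and> v \<noteq> a \<and> (a = 0 \<or> v < a)} = {v \<in> open_vals n R. v < a}"
    and args: "{i \<in> {1..n}. i \<notin> Domain R \<and> i \<noteq> b \<and> (b = 0 \<or> i < b)} = {i \<in> open_args n R. i < b}"
    using \<open>a \<noteq> 0\<close> \<open>b \<noteq> 0\<close> by (auto simp: open_vals_def open_args_def)
  have card: "card e.E = card R + 2" using e.card_E \<open>a \<noteq> 0\<close> \<open>a \<le> n\<close> \<open>b \<noteq> 0\<close> by simp
  show ?thesis using partial_perm_card[OF R] \<open>a \<noteq> 0\<close> \<open>a \<le> n\<close> \<open>b \<noteq> 0\<close>
    unfolding extension_weight_def e.pweight_E vals args card rank_in_def by (auto simp: power_add)
qed

lemma sum_extension_weight: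
  assumes R: "partial_perm n R"
  defines "h \<equiv> n - card R"
  shows "(\<Sum>ch\<in>choices n R. extension_weight x y q n k R ch) = pweight x y q n R *
     ((if h + 1 = k then up_weight x q h else 0)
      + (if h = k then level_weight x y q h else 0)
      + (if h = k + 1 then down_weight q h else 0))"
proof -
  let ?G = "extension_weight x y q n k R"
  let ?w = "pweight x y q n R"
  let ?V = "open_vals n R" and ?A = "open_args n R"
  have "finite ?V" "finite ?A"
    using finite_subset[OF open_vals_subset] finite_subset[OF open_args_subset] by auto
  have card_V: "card ?V = h" and card_A: "card ?A = h"
    using partial_perm_card[OF R] by (simp_all add: h_def)
  have "0 \<notin> ?V" "0 \<notin> ?A" by (auto simp: open_vals_def open_args_def)
  have "(Suc n, Suc n) \<notin> insert 0 ?V \<times> insert 0 ?A" using open_vals_subset[of n R] by auto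
  then have "(\<Sum>ch\<in>choices n R. ?G ch)
      = ?G (Suc n, Suc n) + (\<Sum>ch \<in> insert 0 ?V \<times> insert 0 ?A. ?G ch)"
    unfolding choices_def using \<open>finite ?V\<close> \<open>finite ?A\<close> by (simp add: sum.insert)
  also have "(\<Sum>ch \<in> insert 0 ?V \<times> insert 0 ?A. ?G ch)
      = (\<Sum>a \<in> insert 0 ?V. \<Sum>b \<in> insert 0 ?A. ?G (a, b))"
    by (simp add: sum.cartesian_product)
  also have "\<dots> = (?G (0, 0) + (\<Sum>b\<in>?A. ?G (0, b))) + (\<Sum>a\<in>?V. ?G (a, 0) + (\<Sum>b\<in>?A. ?G (a, b)))"
    using \<open>finite ?V\<close> \<open>finite ?A\<close> \<open>0 \<notin> ?V\<close> \<open>0 \<notin> ?A\<close> by (simp add: sum.insert)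
  also have "(\<Sum>b\<in>?A. ?G (0, b)) = (if h = k then ?w * x * q ^ h * qint q h else 0)"
    using sum_power_rank_in[OF \<open>finite ?A\<close>, of q] card_A
    by (simp add: extension_weight_0_b[OF R] h_def sum_distrib_left[symmetric])
  also have "(\<Sum>a\<in>?V. ?G (a, 0) + (\<Sum>b\<in>?A. ?G (a, b)))
     = (\<Sum>a\<in>?V. (if h = k then ?w * q ^ h * q ^ rank_in ?V a else 0)
          + (if h = k + 1 then ?w * q ^ rank_in ?V a * qint q h else 0))"
    using sum_power_rank_in[OF \<open>finite ?A\<close>, of q] card_A
    by (intro sum.cong refl)
      (simp add: extension_weight_a_0[OF R] extension_weight_a_b[OF R] h_def
        sum_distrib_left[symmetric])
  also have "\<dots> = (if h = k then ?w * q ^ h * qint q h else 0)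
      + (if h = k + 1 then ?w * qint q h * qint q h else 0)"
    using sum_power_rank_in[OF \<open>finite ?V\<close>, of q] card_V
    by (simp add: sum.distrib sum_distrib_left[symmetric] sum_distrib_right[symmetric] mult.assoc)
  finally show ?thesis
    unfolding extension_weight_fixpoint[OF R] extension_weight_0_0[OF R] h_def[symmetric]
    by (simp add: level_weight_def down_weight_def algebra_simps)
qed

definition open_weight :: "'a::comm_ring_1 \<Rightarrow> 'a \<Rightarrow> 'a \<Rightarrow> nat \<Rightarrow> nat \<Rightarrow> 'a" where
  "open_weight x y q n k = (\<Sum>R\<in>partial_perms n. if card R + k = n then pweight x y q n R else 0)"

lemma open_weight_Suc:
  "open_weight x y q (Suc n) k =
       (if k = 0 then 0 else up_weight x q (k - 1) * open_weight x y q n (k - 1))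
     + level_weight x y q k * open_weight x y q n k
     + down_weight q (Suc k) * open_weight x y q n (Suc k)"
proof -
  let ?w = "\<lambda>j R. if card R + j = n then pweight x y q n R else 0"
  have "open_weight x y q (Suc n) k
      = (\<Sum>R\<in>partial_perms n. \<Sum>ch\<in>choices n R. extension_weight x y q n k R ch)"
    unfolding open_weight_def sum_partial_perms_Suc extension_weight_def
    using finite_partial_perms finite_choices by (simp add: sum.Sigma)
  also have "\<dots> = (\<Sum>R\<in>partial_perms n. (if k = 0 then 0 else up_weight x q (k - 1) * ?w (k - 1) R)
     + level_weight x y q k * ?w k R + down_weight q (Suc k) * ?w (Suc k) R)"
  proof (rule sum.cong)
    fix R assume "R \<in> partial_perms n"
    then have R: "partial_perm n R" by (simp add: partial_perms_def)
    define h where "h = n - card R"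
    have "card R \<le> n" using R by (rule partial_perm_card)
    then have w: "?w j R = (if h = j then pweight x y q n R else 0)" for j
      by (auto simp: h_def)
    show "(\<Sum>ch\<in>choices n R. extension_weight x y q n k R ch)
      = (if k = 0 then 0 else up_weight x q (k - 1) * ?w (k - 1) R)
        + level_weight x y q k * ?w k R + down_weight q (Suc k) * ?w (Suc k) R"
      unfolding sum_extension_weight[OF R] h_def [symmetric] w
      by (cases "h + 1 = k"; cases "h = k"; cases "h = k + 1") auto
  qed simp
  also have "\<dots> = (if k = 0 then 0 else up_weight x q (k - 1) * open_weight x y q n (k - 1))
     + level_weight x y q k * open_weight x y q n k
     + down_weight q (Suc k) * open_weight x y q n (Suc k)"
    unfolding open_weight_def by (simp add: sum.distrib sum_distrib_left)
  finally show ?thesis .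
qed

lemma open_weight_0_left: "open_weight x y q 0 k = (if k = 0 then 1 else 0)"
proof -
  have "partial_perms 0 = {{}}" by (auto simp: partial_perms_def partial_perm_def)
  then show ?thesis by (simp add: open_weight_def pweight_def pexc_def pfix_def pinv_def)
qed

lemma open_weight_eq_motzkin:
  "open_weight x y q n k = motzkin (up_weight x q) (level_weight x y q) (down_weight q) n k"
proof (induction n arbitrary: k)
  case 0
  then show ?case by (simp add: open_weight_0_left)
next
  case (Suc n)
  show ?case by (simp only: open_weight_Suc motzkin.simps Suc.IH)
qed

section \<open>Permutations as complete partial permutations\<close>

definition graph :: "nat \<Rightarrow> (nat \<Rightarrow> nat) \<Rightarrow> (nat \<times> nat) set" where
  "graph n s = (\<lambda>i. (i, s i)) ` {1..n}"

definition perm_of :: "nat \<Rightarrow> (nat \<times> nat) set \<Rightarrow> nat \<Rightarrow> nat" where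
  "perm_of n R i = (if i \<in> {1..n} then THE v. (i, v) \<in> R else i)"

lemma mem_graph: "(i, u) \<in> graph n s \<longleftrightarrow> i \<in> {1..n} \<and> u = s i"
  by (auto simp: graph_def)

lemma partial_perm_graph:
  assumes s: "s permutes {1..n}"
  shows "partial_perm n (graph n s)" "card (graph n s) = n"
proof -
  have "i \<in> {1..n} \<Longrightarrow> s i \<in> {1..n}" for i using permutes_in_image[OF s] by blast
  then have "graph n s \<subseteq> {1..n} \<times> {1..n}" by (auto simp: graph_def)
  then show "partial_perm n (graph n s)" unfolding partial_perm_def
    using permutes_inj[OF s] by (auto simp: mem_graph dest: injD)
  have "card (graph n s) = card {1..n}"
    unfolding graph_def by (rule card_image) (simp add: inj_on_def)
  then show "card (graph n s) = n" by simp
qed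

lemma img_gt_graph:
  "i \<in> {1..n} \<Longrightarrow> img_gt (graph n s) i v \<longleftrightarrow> v < s i"
  unfolding img_gt_def Domain_iff mem_graph by auto

lemma preimg_gt_graph:
  assumes s: "s permutes {1..n}" and "v \<in> {1..n}"
  shows "preimg_gt (graph n s) v i \<longleftrightarrow> (\<exists>j\<in>{1..n}. s j = v \<and> i < j)"
proof -
  have "v \<in> s ` {1..n}" using permutes_image[OF s] \<open>v \<in> {1..n}\<close> by simp
  then obtain j where "j \<in> {1..n}" "s j = v" by blast
  then have "v \<in> Range (graph n s)" unfolding Range_iff mem_graph by auto
  then show ?thesis unfolding preimg_gt_def mem_graph by blast
qed

lemma pweight_graph:
  assumes s: "s permutes {1..n}"
  shows "pweight x y q n (graph n s) = x ^ exc n s * y ^ fixpts n s * q ^ Defs.inv n s"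
proof -
  have in_image: "i \<in> {1..n} \<Longrightarrow> s i \<in> {1..n}" for i using permutes_in_image[OF s] by blast
  have "pexc n (graph n s) = exc n s" unfolding pexc_def exc_def
    by (rule arg_cong[where f = card]) (auto simp: img_gt_graph)
  moreover have "pfix n (graph n s) = fixpts n s" unfolding pfix_def fixpts_def mem_graph
    by (rule arg_cong[where f = card]) auto
  moreover have "pinv n (graph n s) = Defs.inv n s"
  proof -
    let ?I = "{(i, j). i \<in> {1..n} \<and> j \<in> {1..n} \<and> i < j \<and> s i > s j}"
    let ?C = "{p \<in> {1..n} \<times> {1..n}.
                img_gt (graph n s) (fst p) (snd p) \<and> preimg_gt (graph n s) (snd p) (fst p)}"
    have "?C = (\<lambda>(i, j). (i, s j)) ` ?I"
    proof (rule set_eqI, rule iffI)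
      fix p assume p: "p \<in> ?C"
      obtain i v where iv: "p = (i, v)" by fastforce
      have "i \<in> {1..n}" "v \<in> {1..n}" using p iv by auto
      have "v < s i" using p iv \<open>i \<in> {1..n}\<close> img_gt_graph by auto
      moreover obtain j where "j \<in> {1..n}" "s j = v" "i < j"
        using p iv \<open>v \<in> {1..n}\<close> preimg_gt_graph[OF s] by auto
      ultimately show "p \<in> (\<lambda>(i, j). (i, s j)) ` ?I" using iv \<open>i \<in> {1..n}\<close> by force
    next
      fix p assume "p \<in> (\<lambda>(i, j). (i, s j)) ` ?I"
      then obtain i j where "p = (i, s j)" "i \<in> {1..n}" "j \<in> {1..n}" "i < j" "s i > s j"
        by auto
      then show "p \<in> ?C" using img_gt_graph preimg_gt_graph[OF s] in_image by auto
    qed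
    moreover have "inj_on (\<lambda>(i, j). (i, s j)) ?I"
      using permutes_inj[OF s] by (auto simp: inj_on_def dest: injD)
    ultimately show ?thesis unfolding pinv_def Defs.inv_def by (simp add: card_image)
  qed
  ultimately show ?thesis unfolding pweight_def by simp
qed

lemma partial_perm_full:
  assumes R: "partial_perm n R" and "card R = n"
  shows "Domain R = {1..n}" "Range R = {1..n}"
proof -
  have sub: "Domain R \<subseteq> {1..n}" "Range R \<subseteq> {1..n}"
    using partial_permD(1)[OF R] by auto
  have "inj_on fst R" "inj_on snd R"
    using partial_permD(2,3)[OF R] by (auto simp: inj_on_def)
  then have "card (Domain R) = n" "card (Range R) = n"
    using \<open>card R = n\<close>
    by (simp_all add: card_image fst_eq_Domain [symmetric] snd_eq_Range [symmetric])
  then show "Domain R = {1..n}" "Range R = {1..n}"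
    using sub by (simp_all add: card_subset_eq)
qed

lemma perm_of_outside: "i \<notin> {1..n} \<Longrightarrow> perm_of n R i = i"
  unfolding perm_of_def by (rule if_not_P)

lemma perm_of_eq:
  assumes R: "partial_perm n R" and "(i, v) \<in> R"
  shows "perm_of n R i = v"
proof -
  have "i \<in> {1..n}" using partial_permD(1)[OF R \<open>(i, v) \<in> R\<close>] by simp
  moreover have "(THE v. (i, v) \<in> R) = v"
    by (rule the_equality) (use partial_permD(2)[OF R] \<open>(i, v) \<in> R\<close> in blast)+
  ultimately show ?thesis by (simp add: perm_of_def)
qed

lemma perm_of_mem:
  assumes R: "partial_perm n R" and "card R = n" and "i \<in> {1..n}"
  shows "(i, perm_of n R i) \<in> R"
proof -
  obtain v where "(i, v) \<in> R" using partial_perm_full(1)[OF assms(1,2)] assms(3) by blast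
  then show ?thesis using perm_of_eq[OF R] by simp
qed

lemma graph_perm_of:
  assumes R: "partial_perm n R" and "card R = n"
  shows "graph n (perm_of n R) = R"
proof (rule set_eqI)
  fix p :: "nat \<times> nat"
  obtain i v where p: "p = (i, v)" by fastforce
  show "p \<in> graph n (perm_of n R) \<longleftrightarrow> p \<in> R"
    unfolding p mem_graph
    using perm_of_mem[OF assms] perm_of_eq[OF R] partial_permD(1)[OF R] by blast
qed

lemma perm_of_permutes:
  assumes R: "partial_perm n R" and "card R = n"
  shows "perm_of n R permutes {1..n}"
proof (rule bij_imp_permutes)
  have "inj_on (perm_of n R) {1..n}"
    by (rule inj_onI) (use perm_of_mem[OF assms] partial_permD(3)[OF R] in metis)
  moreover have "perm_of n R ` {1..n} = {1..n}"
  proof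
    show "perm_of n R ` {1..n} \<subseteq> {1..n}"
      using perm_of_mem[OF assms] partial_permD(1)[OF R] by blast
    show "{1..n} \<subseteq> perm_of n R ` {1..n}"
    proof
      fix v assume "v \<in> {1..n}"
      then obtain i where "(i, v) \<in> R" using partial_perm_full(2)[OF assms] by blast
      then show "v \<in> perm_of n R ` {1..n}" using perm_of_eq[OF R] partial_permD(1)[OF R] by force
    qed
  qed
  ultimately show "bij_betw (perm_of n R) {1..n} {1..n}" by (simp add: bij_betw_def)
qed (rule perm_of_outside)

lemma perm_of_graph:
  assumes s: "s permutes {1..n}"
  shows "perm_of n (graph n s) = s"
proof
  fix i show "perm_of n (graph n s) i = s i"
  proof (cases "i \<in> {1..n}")
    case True
    then show ?thesis
      using perm_of_eq[OF partial_perm_graph(1)[OF s], of i "s i"] by (simp add: mem_graph)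
  next
    case False
    then show ?thesis by (simp add: perm_of_outside permutes_not_in[OF s])
  qed
qed

lemma open_weight_0_right:
  "open_weight x y q n 0
     = (\<Sum>\<sigma> \<in> {\<sigma>. \<sigma> permutes {1..n}}. x ^ exc n \<sigma> * y ^ fixpts n \<sigma> * q ^ Defs.inv n \<sigma>)"
proof -
  have "open_weight x y q n 0 = (\<Sum>R \<in> {R \<in> partial_perms n. card R = n}. pweight x y q n R)"
    unfolding open_weight_def using finite_partial_perms by (simp add: sum.inter_filter)
  also have "\<dots> = (\<Sum>\<sigma> \<in> {\<sigma>. \<sigma> permutes {1..n}}. pweight x y q n (graph n \<sigma>))"
  proof (rule sum.reindex_bij_witness[where j = "perm_of n" and i = "graph n"])
    fix R assume "R \<in> {R \<in> partial_perms n. card R = n}"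
    then have R: "partial_perm n R" "card R = n" by (auto simp: partial_perms_def)
    show "graph n (perm_of n R) = R" by (rule graph_perm_of[OF R])
    then show "pweight x y q n (graph n (perm_of n R)) = pweight x y q n R" by simp
    show "perm_of n R \<in> {\<sigma>. \<sigma> permutes {1..n}}" using perm_of_permutes[OF R] by simp
  next
    fix \<sigma> assume "\<sigma> \<in> {\<sigma>. \<sigma> permutes {1..n}}"
    then have s: "\<sigma> permutes {1..n}" by simp
    show "perm_of n (graph n \<sigma>) = \<sigma>" by (rule perm_of_graph[OF s])
    show "graph n \<sigma> \<in> {R \<in> partial_perms n. card R = n}"
      using partial_perm_graph[OF s] by (simp add: partial_perms_def)
  qed
  also have "\<dots> = (\<Sum>\<sigma> \<in> {\<sigma>. \<sigma> permutes {1..n}}. x ^ exc n \<sigma> * y ^ fixpts n \<sigma> * q ^ Defs.inv n \<sigma>)"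
    by (simp add: pweight_graph)
  finally show ?thesis .
qed

theorem corollary4p2:
  fixes x y q :: "'a::field"
  defines "a \<equiv> (\<lambda>h. x * q ^ h * qint q (h + 1))"
      and "b \<equiv> (\<lambda>h. y * q ^ (2 * h) + (1 + x) * q ^ h * qint q h)"
      and "c \<equiv> (\<lambda>h. q ^ h * qint q h)"
  shows "(\<lambda>k. jconv b (\<lambda>h. a (h - 1) * c h) k 0) \<longlonglongrightarrow>
           Abs_fps (\<lambda>n. if n = 0 then 1
                         else (\<Sum>\<sigma> \<in> {\<sigma>. \<sigma> permutes {1..n}}.
                                 x ^ exc n \<sigma> * y ^ fixpts n \<sigma> * q ^ inv n \<sigma>))"
proof (rule tendsto_fpsI, rule eventually_sequentiallyI)
  fix n K :: nat assume "Suc n \<le> K"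
  have lam: "a (Suc h - 1) * c (Suc h) = up_weight x q h * down_weight q (Suc h)" for h
  proof -
    have "a (Suc h - 1) * c (Suc h) = x * (q ^ h * q ^ Suc h) * (qint q (Suc h) * qint q (Suc h))"
      by (simp add: a_def c_def ac_simps)
    also have "q ^ h * q ^ Suc h = q ^ (2 * h + 1)"
      by (simp add: power_add [symmetric] mult_2)
    finally show ?thesis by (simp add: up_weight_def down_weight_def)
  qed
  have "b = level_weight x y q" by (simp add: b_def level_weight_def fun_eq_iff)
  then have "fps_nth (jconv b (\<lambda>h. a (h - 1) * c h) K 0) n = open_weight x y q n 0"
    using coeff_jconv[where lam = "\<lambda>h. a (h - 1) * c h", OF lam] \<open>Suc n \<le> K\<close>
    by (simp add: open_weight_eq_motzkin)
  also have "\<dots> = (if n = 0 then 1 else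
      (\<Sum>\<sigma> \<in> {\<sigma>. \<sigma> permutes {1..n}}. x ^ exc n \<sigma> * y ^ fixpts n \<sigma> * q ^ inv n \<sigma>))"
    by (cases "n = 0") (simp add: open_weight_0_left, simp add: open_weight_0_right)
  finally show "fps_nth (jconv b (\<lambda>h. a (h - 1) * c h) K 0) n = fps_nth (Abs_fps (\<lambda>n. if n = 0 then 1
      else (\<Sum>\<sigma> \<in> {\<sigma>. \<sigma> permutes {1..n}}. x ^ exc n \<sigma> * y ^ fixpts n \<sigma> * q ^ inv n \<sigma>))) n"
    by simp
qed

end
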